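(* In the standing setting below, let $x'\in\mathbb{X}$ and $y_0,y_1\in\mathbb{Y}$ with $y_0\neq y_1$, and let $f_i(x)=-c(x,y_i)+c(x',y_i)$ for $i=0,1$. If $x'$ lies in the interior of $\mathbb{X}$, then the set $\{x\in\mathbb{X}: f_0(x)\le f_1(x)\}$ has non-empty interior.
   Context: Standing setting: $\mathbb{X},\mathbb{Y}\subset\mathbb{R}^n$ are compact with non-empty interior; $c:\mathbb{X}\times\mathbb{Y}\to\mathbb{R}$ has continuous $D_xc$, $D_yc$, and continuous mixed second derivatives with $D^2_{xy}c=(D^2_{yx}c)^T$; for each $x$ the map $y\mapsto -D_xc(x,y)$ is injective on $\mathbb{Y}$ and for each $y$ the map $x\mapsto -D_yc(x,y)$ is injective on $\mathbb{X}$; $D^2_{xy}c(x,y)$ is invertible everywhere; for every $y$ the set $\{-D_yc(x,y):x\in\mathbb{X}\}$ is convex and for every $x$ the set $\{-D_xc(x,y):y\in\mathbb{Y}\}$ is convex. *)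

theory Defs
  imports "HOL-Analysis.Analysis"
begin

definition standing_setting ::
  "(real^'n) set \<Rightarrow> (real^'n) set \<Rightarrow> (real^'n \<Rightarrow> real^'n \<Rightarrow> real)
   \<Rightarrow> (real^'n \<Rightarrow> real^'n \<Rightarrow> real^'n) \<Rightarrow> (real^'n \<Rightarrow> real^'n \<Rightarrow> real^'n)
   \<Rightarrow> (real^'n \<Rightarrow> real^'n \<Rightarrow> real^'n^'n) \<Rightarrow> (real^'n \<Rightarrow> real^'n \<Rightarrow> real^'n^'n) \<Rightarrow> bool"
where
  "standing_setting X Y c Dxc Dyc Dxyc Dyxc \<longleftrightarrow>
     compact X \<and> compact Y \<and> interior X \<noteq> {} \<and> interior Y \<noteq> {} \<and>
     (\<forall>x\<in>X. \<forall>y\<in>Y. ((\<lambda>x'. c x' y) has_derivative (\<lambda>h. Dxc x y \<bullet> h)) (at x within X)) \<and>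
     (\<forall>x\<in>X. \<forall>y\<in>Y. ((\<lambda>y'. c x y') has_derivative (\<lambda>k. Dyc x y \<bullet> k)) (at y within Y)) \<and>
     continuous_on (X \<times> Y) (\<lambda>(x, y). Dxc x y) \<and>
     continuous_on (X \<times> Y) (\<lambda>(x, y). Dyc x y) \<and>
     (\<forall>x\<in>X. \<forall>y\<in>Y. ((\<lambda>y'. Dxc x y') has_derivative (\<lambda>k. Dxyc x y *v k)) (at y within Y)) \<and>
     (\<forall>x\<in>X. \<forall>y\<in>Y. ((\<lambda>x'. Dyc x' y) has_derivative (\<lambda>h. Dyxc x y *v h)) (at x within X)) \<and>
     continuous_on (X \<times> Y) (\<lambda>(x, y). Dxyc x y) \<and>
     continuous_on (X \<times> Y) (\<lambda>(x, y). Dyxc x y) \<and>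
     (\<forall>x\<in>X. \<forall>y\<in>Y. Dxyc x y = transpose (Dyxc x y)) \<and>
     (\<forall>x\<in>X. inj_on (\<lambda>y. - Dxc x y) Y) \<and>
     (\<forall>y\<in>Y. inj_on (\<lambda>x. - Dyc x y) X) \<and>
     (\<forall>x\<in>X. \<forall>y\<in>Y. invertible (Dxyc x y)) \<and>
     (\<forall>y\<in>Y. convex ((\<lambda>x. - Dyc x y) ` X)) \<and>
     (\<forall>x\<in>X. convex ((\<lambda>y. - Dxc x y) ` Y))"

end

theory Submission
  imports Defs
begin

text \<open>With \<open>g x = c x y\<^sub>1 - c x y\<^sub>0\<close> the set in question is the sublevel set
  \<open>{x \<in> X. g x \<le> g x'}\<close>. The gradient of \<open>g\<close> at \<open>x'\<close> is
  \<open>D\<^sub>xc(x',y\<^sub>1) - D\<^sub>xc(x',y\<^sub>0)\<close>, which is non-zero by the twist condition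
  (injectivity of \<open>y \<mapsto> -D\<^sub>xc(x',y)\<close>). Hence \<open>g\<close> drops strictly below \<open>g x'\<close>
  along the negative gradient, inside the interior of \<open>X\<close>, and by continuity it stays
  below on an open neighbourhood of such a point.\<close>

lemma eventually_less_along_neg_gradient:
  fixes g :: "'a::real_inner \<Rightarrow> real"
  assumes g': "(g has_derivative (\<lambda>h. v \<bullet> h)) (at a)" and "v \<noteq> 0"
  shows "\<forall>\<^sub>F t in at_right 0. g (a - t *\<^sub>R v) < g a"
proof -
  have line: "((\<lambda>t::real. a - t *\<^sub>R v) has_derivative (\<lambda>t. - (t *\<^sub>R v))) (at 0)"
    by (intro derivative_eq_intros) auto
  have "(g has_derivative (\<lambda>h. v \<bullet> h)) (at (a - (0::real) *\<^sub>R v))"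
    using g' by simp
  from has_derivative_compose[OF line this]
  have "((\<lambda>t. g (a - t *\<^sub>R v)) has_derivative (\<lambda>t. - (t * (v \<bullet> v)))) (at 0)"
    by simp
  moreover have "(\<lambda>t. - (t * (v \<bullet> v))) = (*) (- (v \<bullet> v))"
    by (auto simp: fun_eq_iff)
  ultimately have "((\<lambda>t. g (a - t *\<^sub>R v)) has_field_derivative - (v \<bullet> v)) (at 0)"
    unfolding has_field_derivative_def by metis
  moreover have "- (v \<bullet> v) < 0"
    using \<open>v \<noteq> 0\<close> by simp
  ultimately have "\<exists>d>0. \<forall>t>0. t < d \<longrightarrow> g (a - 0 *\<^sub>R v) > g (a - (0 + t) *\<^sub>R v)"
    by (rule DERIV_neg_dec_right)
  then show ?thesis
    unfolding eventually_at_right_field by simp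
qed

lemma interior_sublevel_set_nonempty:
  fixes g :: "'a::real_inner \<Rightarrow> real"
  assumes "continuous_on S g" and "a \<in> interior S"
    and "(g has_derivative (\<lambda>h. v \<bullet> h)) (at a)" and "v \<noteq> 0"
  shows "interior {x \<in> S. g x \<le> g a} \<noteq> {}"
proof -
  have "((\<lambda>t. a - t *\<^sub>R v) \<longlongrightarrow> a) (at_right 0)"
    by (auto intro!: tendsto_eq_intros)
  then have "\<forall>\<^sub>F t in at_right 0. a - t *\<^sub>R v \<in> interior S"
    using \<open>a \<in> interior S\<close> by (simp add: topological_tendstoD)
  then have "\<forall>\<^sub>F t in at_right (0::real). a - t *\<^sub>R v \<in> {x \<in> interior S. g x < g a}"
    using eventually_less_along_neg_gradient[OF assms(3,4)] by eventually_elim simp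
  then have ne: "{x \<in> interior S. g x < g a} \<noteq> {}"
    using eventually_happens' trivial_limit_at_right_real by blast
  have "open (interior S \<inter> g -` {..<g a})"
    using continuous_on_subset[OF \<open>continuous_on S g\<close> interior_subset]
    by (intro continuous_open_preimage) auto
  then have "{x \<in> interior S. g x < g a} \<subseteq> interior {x \<in> S. g x \<le> g a}"
    using interior_subset by (intro interior_maximal) (auto simp: vimage_def Int_def)
  with ne show ?thesis
    by blast
qed

theorem lemma2p18:
  fixes X Y :: "(real^'n) set"
    and c :: "real^'n \<Rightarrow> real^'n \<Rightarrow> real"
    and Dxc Dyc :: "real^'n \<Rightarrow> real^'n \<Rightarrow> real^'n"
    and Dxyc Dyxc :: "real^'n \<Rightarrow> real^'n \<Rightarrow> real^'n^'n"
    and x' y0 y1 :: "real^'n"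
  assumes "standing_setting X Y c Dxc Dyc Dxyc Dyxc"
    and "x' \<in> X" and "y0 \<in> Y" and "y1 \<in> Y" and "y0 \<noteq> y1"
    and "x' \<in> interior X"
  shows "interior {x \<in> X. - c x y0 + c x' y0 \<le> - c x y1 + c x' y1} \<noteq> {}"
proof -
  define g where "g x = c x y1 - c x y0" for x
  have Dxc: "((\<lambda>x. c x y) has_derivative (\<lambda>h. Dxc x y \<bullet> h)) (at x within X)"
    if "x \<in> X" "y \<in> Y" for x y
    using assms(1) that unfolding standing_setting_def by blast
  have g': "(g has_derivative (\<lambda>h. (Dxc x y1 - Dxc x y0) \<bullet> h)) (at x within X)"
    if "x \<in> X" for x
    unfolding g_def inner_diff_left
    by (intro derivative_intros Dxc that assms(3,4))
  have twist: "inj_on (\<lambda>y. - Dxc x' y) Y"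
    using assms(1,2) unfolding standing_setting_def by blast
  have "Dxc x' y1 - Dxc x' y0 \<noteq> 0"
    using inj_onD[OF twist _ assms(4,3)] assms(5) by auto
  moreover have "(g has_derivative (\<lambda>h. (Dxc x' y1 - Dxc x' y0) \<bullet> h)) (at x')"
    using g'[OF assms(2)] at_within_interior[OF assms(6)] by simp
  moreover have "continuous_on X g"
    using g' by (rule has_derivative_continuous_on)
  ultimately have "interior {x \<in> X. g x \<le> g x'} \<noteq> {}"
    by (intro interior_sublevel_set_nonempty assms(6))
  moreover have "{x \<in> X. g x \<le> g x'} = {x \<in> X. - c x y0 + c x' y0 \<le> - c x y1 + c x' y1}"
    by (auto simp: g_def)
  ultimately show ?thesis
    by simp
qed

end
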